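(* Let $2\le k\le mn$, let $p_x\in\mathcal{P}_k$, let $\mathcal{D}$ be an open connected subset of $\mathbb{C}$, and let $F:\mathcal{D}\rightarrow M_{m\times n}(\mathbb{C})$ be a function whose entries are analytic (holomorphic) functions on $\mathcal{D}$. Let $\mathcal{Z}_{p_x}(\mathcal{D})=\{z\in\mathcal{D} : F(z)\text{ has repeated zeros with respect to } p_x\}$. Then either $\mathcal{Z}_{p_x}(\mathcal{D})=\mathcal{D}$ or $\mathcal{Z}_{p_x}(\mathcal{D})$ has no limit points in $\mathcal{D}$.
   Context: $M_{m\times n}(\mathbb{C})$ is the set of $m\times n$ complex matrices. Let $\mathbb{C}_k[x]$ be the set of complex polynomials of degree $k$ and $\mathbb{C}^k_{\mathrm{sym}}$ the set of unordered $k$-tuples of complex numbers; $r_k:\mathbb{C}_k[x]\to\mathbb{C}^k_{\mathrm{sym}}$ sends a polynomial to the unordered $k$-tuple of its roots (with multiplicity). $\mathcal{P}_k$ is the set of maps $p_x:M_{m\times n}(\mathbb{C})\to\mathbb{C}_k[x]$ of the form $p_x(A)=x^k+\sum_{i=1}^{k}q_i(A)x^{i-1}$, where each $q_i(A)$ is a polynomial function of the entries of $A$, such that $r_k(p_x(M_{m\times n}(\mathbb{C})))=\mathbb{C}^k_{\mathrm{sym}}$. A number $z\in\mathbb{C}$ is a zero of $A$ with respect to $p_x$ if the polynomial $p_x(A)$ vanishes at $x=z$; $A$ has repeated zeros with respect to $p_x$ if $p_x(A)$ has a root of multiplicity at least $2$, and distinct zeros otherwise. *)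

theory Defs
  imports "HOL-Analysis.Analysis" "HOL-Computational_Algebra.Computational_Algebra"
begin

inductive polyfun_entries :: "(complex^'n^'m \<Rightarrow> complex) \<Rightarrow> bool" where
  const: "polyfun_entries (\<lambda>A. c)"
| entry: "polyfun_entries (\<lambda>A. A $ i $ j)"
| add: "polyfun_entries f \<Longrightarrow> polyfun_entries g \<Longrightarrow> polyfun_entries (\<lambda>A. f A + g A)"
| mult: "polyfun_entries f \<Longrightarrow> polyfun_entries g \<Longrightarrow> polyfun_entries (\<lambda>A. f A * g A)"

definition px :: "nat \<Rightarrow> (nat \<Rightarrow> complex^'n^'m \<Rightarrow> complex) \<Rightarrow> complex^'n^'m \<Rightarrow> complex poly" where
  "px k q A = monom 1 k + (\<Sum>i=1..k. monom (q i A) (i - 1))"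

text \<open>Membership in P_k: the q_i are polynomial functions of the entries and
  every unordered k-tuple (multiset of size k) of complex numbers is the
  multiset of roots (with multiplicity) of some p_x(A).\<close>
definition in_Pk :: "nat \<Rightarrow> (nat \<Rightarrow> complex^'n^'m \<Rightarrow> complex) \<Rightarrow> bool" where
  "in_Pk k q \<longleftrightarrow> (\<forall>i\<in>{1..k}. polyfun_entries (q i)) \<and>
     proots ` (px k q ` UNIV) = {R :: complex multiset. size R = k}"

definition repeated_zeros :: "nat \<Rightarrow> (nat \<Rightarrow> complex^'n^'m \<Rightarrow> complex) \<Rightarrow> complex^'n^'m \<Rightarrow> bool" where
  "repeated_zeros k q A \<longleftrightarrow> (\<exists>z. order z (px k q A) \<ge> 2)"

end

theory Submission
  imports Defs "HOL-Complex_Analysis.Complex_Analysis" "Subresultants.Subresultant_Gcd"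
  "HOL-Computational_Algebra.Field_as_Ring"
begin

text \<open>The polynomial \<open>p\<^sub>x(F z)\<close> is monic of degree \<open>k\<close> with coefficients holomorphic in \<open>z\<close>.
  It has a repeated zero iff it shares a root with its derivative, i.e. iff the resultant
  of \<open>p\<^sub>x(F z)\<close> and its derivative vanishes. That resultant is the determinant of a Sylvester
  matrix of fixed size whose entries are coefficients, hence a holomorphic function of \<open>z\<close>,
  and the identity theorem for holomorphic functions on the connected set \<open>D\<close> gives the
  dichotomy.\<close>

no_notation Matrix.vec_index (infixl \<open>$\<close> 100)
no_notation fps_nth (infixl \<open>$\<close> 75)

lemma ex_order_ge_2_iff_common_root_pderiv:
  fixes p :: "'a::field_char_0 poly"
  assumes "p \<noteq> 0"
  shows "(\<exists>z. 2 \<le> order z p) \<longleftrightarrow> (\<exists>z. poly p z = 0 \<and> poly (pderiv p) z = 0)"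
proof -
  have "rsquarefree p \<longleftrightarrow> \<not> (\<exists>z. 2 \<le> order z p)"
    using assms unfolding rsquarefree_def by (simp add: not_le less_2_cases_iff)
  then show ?thesis
    using rsquarefree_roots[of p] by blast
qed

lemma common_root_iff_degree_gcd_neq_0:
  fixes f g :: "complex poly"
  assumes "f \<noteq> 0"
  shows "(\<exists>z. poly f z = 0 \<and> poly g z = 0) \<longleftrightarrow> degree (gcd f g) \<noteq> 0"
proof
  assume "\<exists>z. poly f z = 0 \<and> poly g z = 0"
  then obtain z where "[:-z, 1:] dvd f" "[:-z, 1:] dvd g"
    by (auto simp: poly_eq_0_iff_dvd)
  then have "[:-z, 1:] dvd gcd f g"
    by (rule gcd_greatest)
  moreover have "gcd f g \<noteq> 0"
    using assms by simp
  ultimately have "degree [:-z, 1:] \<le> degree (gcd f g)"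
    by (rule dvd_imp_degree_le)
  then show "degree (gcd f g) \<noteq> 0"
    by simp
next
  assume "degree (gcd f g) \<noteq> 0"
  then have "\<not> constant (poly (gcd f g))"
    by (simp add: constant_degree)
  then obtain z where "poly (gcd f g) z = 0"
    using Fundamental_Theorem_Algebra.fundamental_theorem_of_algebra by blast
  then have "[:-z, 1:] dvd gcd f g"
    by (simp add: poly_eq_0_iff_dvd)
  then have "[:-z, 1:] dvd f" "[:-z, 1:] dvd g"
    using dvd_trans gcd_dvd1 gcd_dvd2 by blast+
  then show "\<exists>z. poly f z = 0 \<and> poly g z = 0"
    by (auto simp: poly_eq_0_iff_dvd)
qed

lemma repeated_root_iff_resultant_pderiv_eq_0:
  fixes p :: "complex poly"
  assumes "p \<noteq> 0"
  shows "(\<exists>z. 2 \<le> order z p) \<longleftrightarrow> resultant p (pderiv p) = 0"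
  using assms by (simp add: ex_order_ge_2_iff_common_root_pderiv
      common_root_iff_degree_gcd_neq_0 resultant_0_gcd)

lemma coeff_px:
  "coeff (px k q A) n = (if n = k then 1 else 0) + (if n < k then q (Suc n) A else 0)"
proof -
  have "coeff (px k q A) n = coeff (monom 1 k) n + (\<Sum>i=1..k. coeff (monom (q i A) (i - 1)) n)"
    by (simp only: px_def coeff_add coeff_sum)
  also have "(\<Sum>i=1..k. coeff (monom (q i A) (i - 1)) n) =
      (\<Sum>i=1..k. if Suc n = i then q i A else 0)"
    by (rule sum.cong) (auto simp: coeff_monom)
  also have "\<dots> = (if n < k then q (Suc n) A else 0)"
    by (simp add: sum.delta)
  finally show ?thesis
    by (auto simp: coeff_monom)
qed

lemma degree_px: "degree (px k q A) = k"
proof (rule antisym)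
  show "degree (px k q A) \<le> k"
    by (rule degree_le) (simp add: coeff_px)
  show "k \<le> degree (px k q A)"
    by (rule le_degree) (simp add: coeff_px)
qed

lemma px_neq_0: "px k q A \<noteq> 0"
proof
  assume "px k q A = 0"
  then have "coeff (px k q A) k = 0"
    by simp
  then show False
    by (simp add: coeff_px)
qed

lemma polyfun_entries_holomorphic_on:
  assumes "polyfun_entries f"
    and "\<And>i j. (\<lambda>z. F z $ i $ j) holomorphic_on D"
  shows "(\<lambda>z. f (F z)) holomorphic_on D"
  using assms(1) by induction (simp_all add: assms(2) holomorphic_on_add holomorphic_on_mult)

lemma coeff_px_holomorphic_on:
  assumes "\<forall>i\<in>{1..k}. polyfun_entries (q i)"
    and "\<And>i j. (\<lambda>z. F z $ i $ j) holomorphic_on D"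
  shows "(\<lambda>z. coeff (px k q (F z)) n) holomorphic_on D"
proof (cases "n < k")
  case True
  then have "polyfun_entries (q (Suc n))"
    using assms(1) by simp
  then have "(\<lambda>z. q (Suc n) (F z)) holomorphic_on D"
    by (rule polyfun_entries_holomorphic_on[OF _ assms(2)])
  with True show ?thesis
    by (simp add: coeff_px)
next
  case False
  then show ?thesis
    by (simp add: coeff_px)
qed

lemma det_holomorphic_on:
  fixes A :: "complex \<Rightarrow> complex mat"
  assumes "\<And>z. A z \<in> carrier_mat N N"
    and "\<And>i j. i < N \<Longrightarrow> j < N \<Longrightarrow> (\<lambda>z. A z $$ (i, j)) holomorphic_on D"
  shows "(\<lambda>z. det (A z)) holomorphic_on D"
proof -
  have Leibniz: "det (A z) =
      (\<Sum>p \<in> {p. p permutes {0..<N}}. signof p * (\<Prod>i = 0..<N. A z $$ (i, p i)))" for z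
    using assms(1)[of z] by (simp add: det_def)
  have "(\<lambda>z. A z $$ (i, p i)) holomorphic_on D" if "p permutes {0..<N}" "i \<in> {0..<N}" for p i
    using that permutes_in_image[OF that(1)] by (intro assms(2)) auto
  then show ?thesis
    unfolding Leibniz by (intro holomorphic_intros) auto
qed

lemma resultant_holomorphic_on:
  fixes f g :: "complex \<Rightarrow> complex poly"
  assumes "\<And>z. degree (f z) = m" and "\<And>z. degree (g z) = n"
    and "\<And>i. (\<lambda>z. coeff (f z) i) holomorphic_on D"
    and "\<And>i. (\<lambda>z. coeff (g z) i) holomorphic_on D"
  shows "(\<lambda>z. resultant (f z) (g z)) holomorphic_on D"
proof -
  have if_zero_holomorphic: "(\<lambda>z. if c then h z else 0) holomorphic_on D"
    if "h holomorphic_on D" for c and h :: "complex \<Rightarrow> complex"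
    using that by (cases c) simp_all
  have "resultant (f z) (g z) = det (sylvester_mat_sub m n (f z) (g z))" for z
    by (simp add: resultant_def sylvester_mat_def assms(1,2))
  moreover have "(\<lambda>z. det (sylvester_mat_sub m n (f z) (g z))) holomorphic_on D"
  proof (rule det_holomorphic_on[OF sylvester_mat_sub_carrier])
    fix i j
    show "(\<lambda>z. sylvester_mat_sub m n (f z) (g z) $$ (i, j)) holomorphic_on D"
      if "i < m + n" "j < m + n"
      using that
      by (cases "i < n") (simp_all add: sylvester_mat_sub_index if_zero_holomorphic assms(3,4))
  qed
  ultimately show ?thesis
    by simp
qed

lemma holomorphic_zeros_all_or_no_limit_point:
  assumes "f holomorphic_on S" and "open S" and "connected S"
  shows "{z \<in> S. f z = 0} = S \<or> \<not> (\<exists>w\<in>S. w islimpt {z \<in> S. f z = 0})"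
proof (cases "\<exists>w\<in>S. w islimpt {z \<in> S. f z = 0}")
  case True
  then obtain w where w: "w \<in> S" "w islimpt {z \<in> S. f z = 0}"
    by blast
  have "f z = 0" if "z \<in> S" for z
    by (rule analytic_continuation[OF assms _ w _ that]) auto
  then have "{z \<in> S. f z = 0} = S"
    by auto
  then show ?thesis ..
next
  case False
  then show ?thesis ..
qed

theorem theorem5p3:
  fixes k :: nat and q :: "nat \<Rightarrow> complex^'n^'m \<Rightarrow> complex"
    and D :: "complex set" and F :: "complex \<Rightarrow> complex^'n^'m"
  assumes "2 \<le> k" and "k \<le> CARD('m) * CARD('n)"
    and "in_Pk k q"
    and "open D" and "connected D"
    and "\<And>i j. (\<lambda>z. F z $ i $ j) holomorphic_on D"
  shows "{z \<in> D. repeated_zeros k q (F z)} = D \<or>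
         \<not> (\<exists>w\<in>D. w islimpt {z \<in> D. repeated_zeros k q (F z)})"
proof -
  define R where "R z = resultant (px k q (F z)) (pderiv (px k q (F z)))" for z
  have rep_iff: "repeated_zeros k q (F z) \<longleftrightarrow> R z = 0" for z
    unfolding repeated_zeros_def R_def
    by (rule repeated_root_iff_resultant_pderiv_eq_0[OF px_neq_0])
  have "\<forall>i\<in>{1..k}. polyfun_entries (q i)"
    using assms(3) by (simp add: in_Pk_def)
  then have coeff_hol: "(\<lambda>z. coeff (px k q (F z)) i) holomorphic_on D" for i
    by (rule coeff_px_holomorphic_on[OF _ assms(6)])
  have coeff_pderiv_hol: "(\<lambda>z. coeff (pderiv (px k q (F z))) i) holomorphic_on D" for i
    unfolding coeff_pderiv by (intro holomorphic_on_mult holomorphic_on_const coeff_hol)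
  have degree_pderiv_px: "degree (pderiv (px k q A)) = k - 1" for A
    by (simp add: degree_pderiv degree_px)
  have R_hol: "R holomorphic_on D"
    unfolding R_def
    by (rule resultant_holomorphic_on[OF degree_px degree_pderiv_px coeff_hol coeff_pderiv_hol])
  show ?thesis
    using holomorphic_zeros_all_or_no_limit_point[OF R_hol assms(4,5)] by (simp only: rep_iff)
qed

end
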